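(* If $g\in\mathcal{G}$ is $\mathbb{S}$-nearly periodic, then for every $\delta>0$ there exists an $\mathbb{S}$-normal function $h\in\mathcal{G}$ that is not 1-pass tractable and satisfies $\Theta(g,h)\le\delta$.
   Context: Streams: a stream of length $m$ with domain $[n]$ is a list $D=\langle (i_1,\delta_1),\dots,(i_m,\delta_m)\rangle$ with $i_j\in[n]$, $\delta_j\in\mathbb{Z}$; its frequency vector $V(D)=v\in\mathbb{Z}^n$ has $v_i=\sum_{j:i_j=i}\delta_j$. (Turnstile model) there is $M\in\mathbb{N}$ such that the frequency vector of $D$ and of every prefix of $D$ lies in $\{-M,\dots,M\}^n$; throughout $M$ is polynomial in $n$. $\mathcal{D}(n,m)$ is the set of such streams with domain $[n]$ and length at most $m$. A $p$-pass algorithm reads the stream $p$ times in order and may use randomness. For $g:\mathbb{Z}_{\ge0}\to\mathbb{R}$ and $v\in\mathbb{Z}^n$ let $g(v)=\sum_{i=1}^n g(|v_i|)$. The problem $(g,\epsilon)$-SUM is to output $\hat G$ with $P\big((1-\epsilon)g(V(D))\le \hat G\le (1+\epsilon)g(V(D))\big)\ge 2/3$. A function $f:\mathbb{R}_{\ge0}\to\mathbb{R}_{\ge0}$ is sub-polynomial if for every $\alpha>0$, $\lim_{x\to\infty}x^\alpha f(x)=\infty$ and $\lim_{x\to\infty}x^{-\alpha}f(x)=0$. $g$ is $p$-pass tractable if for every sub-polynomial $h$ and every $\epsilon\ge 1/h(nM)$ there exist a sub-polynomial $h^*$ and a $p$-pass algorithm (with oracle access to $g$) that solves $(g,\epsilon)$-SUM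 for all streams in $\mathcal{D}(n,m)$ and all $n,M\ge1$ using at most $h^*(nM)$ bits of space in the worst case. $\mathcal{G}=\{g:\mathbb{Z}_{\ge0}\to\mathbb{R}: g(0)=0,\ g(1)=1,\ g(x)>0\ \forall x>0\}$. For $g,h\in\mathcal{G}$, $\Theta(g,h)=\sup_{x\in\mathbb{N}}|\log g(x)-\log h(x)|$. For a set $\mathcal{S}$ of functions, $g$ is $\mathcal{S}$-nearly periodic if (1) there is $\alpha>0$ such that for every $N>0$ there exist $x,y\in\mathbb{N}$, $x<y$, $y\ge N$ with $g(y)\le g(x)/y^\alpha$ (such $y$ is called an $\alpha$-period of $g$); and (2) for every $\alpha>0$ and every $h\in\mathcal{S}$ there is $N_1>0$ such that for all $\alpha$-periods $y\ge N_1$ and all $x<y$ with $g(y)y^\alpha\le g(x)$, $|g(x+y)-g(x)|\le \min\{g(x),g(x+y)\}h(y)$. $g$ is $\mathcal{S}$-normal if it is not $\mathcal{S}$-nearly periodic. $\mathbb{S}$ denotes the set of non-increasing sub-polynomial functions on $\mathbb{Z}_{\ge0}$. *)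

theory Defs
  imports "HOL-Probability.Probability"
begin

definition subpoly :: "(real \<Rightarrow> real) \<Rightarrow> bool" where
  "subpoly f \<longleftrightarrow> (\<forall>x\<ge>0. f x \<ge> 0) \<and>
     (\<forall>\<alpha>>0. filterlim (\<lambda>x. x powr \<alpha> * f x) at_top at_top \<and>
             ((\<lambda>x. x powr (-\<alpha>) * f x) \<longlongrightarrow> 0) at_top)"

definition S_class :: "(nat \<Rightarrow> real) set" where
  "S_class = {f. (\<forall>x. f x \<ge> 0) \<and> antimono f \<and>
     (\<forall>\<alpha>>0. filterlim (\<lambda>x. real x powr \<alpha> * f x) at_top sequentially \<and>
             (\<lambda>x. real x powr (-\<alpha>) * f x) \<longlonglongrightarrow> 0)}"

definition G_class :: "(nat \<Rightarrow> real) set" where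
  "G_class = {g. g 0 = 0 \<and> g 1 = 1 \<and> (\<forall>x>0. g x > 0)}"

definition Theta :: "(nat \<Rightarrow> real) \<Rightarrow> (nat \<Rightarrow> real) \<Rightarrow> ereal" where
  "Theta g h = (SUP x\<in>{1..}. ereal \<bar>ln (g x) - ln (h x)\<bar>)"

definition alpha_period :: "(nat \<Rightarrow> real) \<Rightarrow> real \<Rightarrow> nat \<Rightarrow> bool" where
  "alpha_period g \<alpha> y \<longleftrightarrow> (\<exists>x<y. g y \<le> g x / real y powr \<alpha>)"

definition nearly_periodic :: "(nat \<Rightarrow> real) set \<Rightarrow> (nat \<Rightarrow> real) \<Rightarrow> bool" where
  "nearly_periodic SS g \<longleftrightarrow>
     (\<exists>\<alpha>>0. \<forall>N>0. \<exists>x y. x < y \<and> real y \<ge> N \<and> g y \<le> g x / real y powr \<alpha>) \<and>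
     (\<forall>\<alpha>>0. \<forall>h\<in>SS. \<exists>N1>0. \<forall>y x. alpha_period g \<alpha> y \<and> real y \<ge> N1 \<and> x < y \<and>
          g y * real y powr \<alpha> \<le> g x \<longrightarrow>
          \<bar>g (x + y) - g x\<bar> \<le> min (g x) (g (x + y)) * h y)"

definition normal :: "(nat \<Rightarrow> real) set \<Rightarrow> (nat \<Rightarrow> real) \<Rightarrow> bool" where
  "normal SS g \<longleftrightarrow> \<not> nearly_periodic SS g"

text \<open>A stream is a list of updates (i, delta); the frequency vector is indexed by nat.\<close>
definition freq :: "(nat \<times> int) list \<Rightarrow> nat \<Rightarrow> int" where
  "freq D i = sum_list (map snd (filter (\<lambda>p. fst p = i) D))"

text \<open>Turnstile streams with domain [n] = {1..n} and bound M (any length).\<close>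
definition valid_stream :: "nat \<Rightarrow> nat \<Rightarrow> (nat \<times> int) list \<Rightarrow> bool" where
  "valid_stream n M D \<longleftrightarrow> (\<forall>p\<in>set D. fst p \<in> {1..n}) \<and>
     (\<forall>k\<le>length D. \<forall>i. \<bar>freq (take k D) i\<bar> \<le> int M)"

definition gsum :: "(nat \<Rightarrow> real) \<Rightarrow> nat \<Rightarrow> (nat \<times> int) list \<Rightarrow> real" where
  "gsum g n D = (\<Sum>i=1..n. g (nat \<bar>freq D i\<bar>))"

text \<open>A one-pass algorithm: a randomized automaton with states in nat, an initial state
  distribution, a randomized transition per update, and a randomized output.
  Its memory is the set Q of states it may occupy; it uses at most s bits iff
  card Q \<le> 2 powr s.\<close>
record alg1 =
  a_init :: "nat pmf"
  a_step :: "nat \<Rightarrow> nat \<times> int \<Rightarrow> nat pmf"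
  a_out :: "nat \<Rightarrow> real pmf"

definition run_alg :: "alg1 \<Rightarrow> (nat \<times> int) list \<Rightarrow> real pmf" where
  "run_alg A D = bind_pmf (foldl (\<lambda>s p. bind_pmf s (\<lambda>q. a_step A q p)) (a_init A) D) (a_out A)"

definition space_bounded :: "alg1 \<Rightarrow> real \<Rightarrow> bool" where
  "space_bounded A s \<longleftrightarrow> (\<exists>Q. finite Q \<and> real (card Q) \<le> 2 powr s \<and>
     set_pmf (a_init A) \<subseteq> Q \<and> (\<forall>q\<in>Q. \<forall>p. set_pmf (a_step A q p) \<subseteq> Q))"

definition solves_sum :: "alg1 \<Rightarrow> (nat \<Rightarrow> real) \<Rightarrow> real \<Rightarrow> nat \<Rightarrow> nat \<Rightarrow> bool" where
  "solves_sum A g \<epsilon> n M \<longleftrightarrow> (\<forall>D. valid_stream n M D \<longrightarrow>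
     measure_pmf.prob (run_alg A D)
       {G. (1 - \<epsilon>) * gsum g n D \<le> G \<and> G \<le> (1 + \<epsilon>) * gsum g n D} \<ge> 2/3)"

definition one_pass_tractable :: "(nat \<Rightarrow> real) \<Rightarrow> bool" where
  "one_pass_tractable g \<longleftrightarrow>
     (\<forall>h \<epsilon>. subpoly h \<and> (\<forall>n M. \<epsilon> n M \<ge> 1 / h (real (n * M))) \<longrightarrow>
        (\<exists>hs. subpoly hs \<and> (\<forall>n\<ge>1. \<forall>M\<ge>1. \<exists>A.
           space_bounded A (hs (real (n * M))) \<and> solves_sum A g (\<epsilon> n M) n M)))"

end

theory Submission
  imports Defs "HOL-Real_Asymp.Real_Asymp"
begin

text \<open>
  Choose a sparse sequence of \<open>\<alpha>\<close>-periods \<open>y\<close> of \<open>g\<close>, with witnesses \<open>x\<close>, and change \<open>g\<close>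
  only at the points \<open>x + y\<close>, multiplying it there by \<open>1\<close> or by \<open>e^\<delta>\<close> so that the values at
  \<open>x\<close> and \<open>x + y\<close> differ by a fixed factor \<open>1 + \<kappa>\<close>. The new function \<open>h\<close> is \<open>\<delta>\<close>-close
  to \<open>g\<close>, and the constant \<open>\<kappa>/2\<close> witnesses that it violates the second condition of near
  periodicity. As \<open>h y \<le> h x / y^\<alpha>\<close>, on \<open>n \<approx> y^(\<alpha>/2)\<close> coordinates the \<open>h\<close>-sum of a stream
  that puts \<open>y\<close> on a set \<open>S\<close> and then \<open>x\<close> on a coordinate \<open>i\<close> reveals whether \<open>i \<in> S\<close>.
  A one-pass algorithm therefore solves the index problem with its memory as the message and
  needs \<open>\<Omega>(n)\<close> bits, which is polynomial in \<open>n M\<close>.\<close>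

definition hamming_dist :: "nat \<Rightarrow> nat set \<Rightarrow> nat set \<Rightarrow> nat" where
  "hamming_dist n S T = card {i\<in>{1..n}. (i\<in>S) \<noteq> (i\<in>T)}"

lemma sum_agree_eq_hamming_dist:
  "(\<Sum>i\<in>{1..n}. if (i\<in>S) = (i\<in>T) then 1 else 0 :: real) = real n - real (hamming_dist n S T)"
proof -
  have "real (hamming_dist n S T) = (\<Sum>i\<in>{1..n}. if (i\<in>S) \<noteq> (i\<in>T) then 1 else 0)"
    unfolding hamming_dist_def by (simp add: sum.inter_filter[symmetric])
  moreover have "(\<Sum>i\<in>{1..n}. (if (i\<in>S) = (i\<in>T) then 1 else 0)
      + (if (i\<in>S) \<noteq> (i\<in>T) then 1 else 0) :: real) = (\<Sum>i\<in>{1..n}. 1)"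
    by (intro sum.cong) auto
  ultimately show ?thesis by (simp add: sum.distrib)
qed

lemma card_hamming_ball_le:
  "card {S\<in>Pow {1..n}. hamming_dist n S T \<le> r} \<le> card {U. U \<subseteq> {1..n} \<and> card U \<le> r}"
proof (rule card_inj_on_le)
  let ?diff = "\<lambda>S. {i\<in>{1..n}. (i\<in>S) \<noteq> (i\<in>T)}"
  show "inj_on ?diff {S\<in>Pow {1..n}. hamming_dist n S T \<le> r}"
  proof (rule inj_onI)
    fix S S'
    assume "S \<in> {S\<in>Pow {1..n}. hamming_dist n S T \<le> r}" "S' \<in> {S\<in>Pow {1..n}. hamming_dist n S T \<le> r}"
      and eq: "?diff S = ?diff S'"
    then have "S \<subseteq> {1..n}" "S' \<subseteq> {1..n}" by auto
    moreover have "i \<in> S \<longleftrightarrow> i \<in> S'" if "i \<in> {1..n}" for i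
      using that arg_cong[OF eq, of "\<lambda>U. i \<in> U"] by auto
    ultimately show "S = S'" by blast
  qed
  show "?diff ` {S\<in>Pow {1..n}. hamming_dist n S T \<le> r} \<subseteq> {U. U \<subseteq> {1..n} \<and> card U \<le> r}"
    unfolding hamming_dist_def by auto
qed simp

lemma card_subsets_card_le:
  "card {U. U \<subseteq> {1..n::nat} \<and> card U \<le> r} \<le> (\<Sum>k\<le>r. n choose k)"
proof -
  have "{U. U \<subseteq> {1..n::nat} \<and> card U \<le> r} = (\<Union>k\<in>{..r}. {U. U \<subseteq> {1..n} \<and> card U = k})"
    by auto
  then have "card {U. U \<subseteq> {1..n::nat} \<and> card U \<le> r} \<le> (\<Sum>k\<le>r. card {U. U \<subseteq> {1..n} \<and> card U = k})"
    by (simp add: card_UN_le)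
  also have "\<dots> = (\<Sum>k\<le>r. n choose k)" by (simp add: n_subsets)
  finally show ?thesis .
qed

text \<open>Keep only the terms \<open>k \<le> 2m\<close> of \<open>(2 + 3)^(5m)\<close> and bound each \<open>2^k 3^(5m-k)\<close> below
  by \<open>2^(2m) 3^(3m)\<close>.\<close>
lemma sum_binomial_two_fifths_le:
  "(\<Sum>k\<le>2*m. ((5*m) choose k)) * 2^(2*m) * 3^(3*m) \<le> (5::nat)^(5*m)"
proof -
  have "(\<Sum>k\<le>2*m. ((5*m) choose k)) * 2^(2*m) * 3^(3*m)
      = (\<Sum>k\<le>2*m. ((5*m) choose k) * (2^(2*m) * 3^(3*m)))"
    by (simp add: sum_distrib_right mult.assoc)
  also have "\<dots> \<le> (\<Sum>k\<le>2*m. ((5*m) choose k) * 2^k * 3^(5*m-k))"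
  proof (intro sum_mono)
    fix k assume "k \<in> {..2*m}"
    then have k: "k \<le> 2*m" by simp
    have "(2::nat)^(2*m) = 2^k * 2^(2*m-k)" "(3::nat)^(5*m-k) = 3^(3*m) * 3^(2*m-k)"
      using k by (simp_all flip: power_add)
    moreover have "(2::nat)^(2*m-k) \<le> 3^(2*m-k)" by (rule power_mono) auto
    ultimately show "((5*m) choose k) * (2^(2*m) * 3^(3*m)) \<le> ((5*m) choose k) * 2^k * 3^(5*m-k)"
      by simp
  qed
  also have "\<dots> \<le> (\<Sum>k\<le>5*m. ((5*m) choose k) * 2^k * 3^(5*m-k))"
    by (intro sum_mono2) auto
  also have "\<dots> = (2+3)^(5*m)"
    using binomial_ring[of "2::nat" 3 "5*m"] by simp
  finally show ?thesis by simp
qed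

lemma card_small_subsets_bound:
  "real (card {U. U \<subseteq> {1..5*m} \<and> card U \<le> 2*m}) * (3456/3125)^m \<le> 2^(5*m)"
proof -
  define B where "B = card {U. U \<subseteq> {1..5*m} \<and> card U \<le> 2*m}"
  have "B * 2^(2*m) * 3^(3*m) \<le> (\<Sum>k\<le>2*m. ((5*m) choose k)) * 2^(2*m) * 3^(3*m)"
    unfolding B_def using card_subsets_card_le by simp
  also have "\<dots> \<le> 5^(5*m)" by (rule sum_binomial_two_fifths_le)
  finally have "B * 4^m * 27^m \<le> 3125^m"
    by (simp add: power_mult)
  then have "real (B * 4^m * 27^m) \<le> real (3125^m)"
    by (simp only: of_nat_le_iff)
  then have "real B * 4^m * 27^m \<le> 3125^m"
    by simp
  then have "real B * 4^m * 27^m * 32^m \<le> 3125^m * 32^m"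
    by (intro mult_right_mono) auto
  then have "real B * 4^m * 27^m * 32^m / 3125^m \<le> 32^m"
    by (simp add: divide_le_eq)
  moreover have "real B * (3456/3125)^m = real B * 4^m * 27^m * 32^m / 3125^m"
    by (simp add: power_divide flip: power_mult_distrib)
  moreover have "(2::real)^(5*m) = 32^m" by (simp add: power_mult)
  ultimately show ?thesis unfolding B_def by simp
qed

lemma sum_reverse_triple:
  "(\<Sum>a\<in>A. \<Sum>b\<in>B. \<Sum>c\<in>C. f a b c) = (\<Sum>c\<in>C. \<Sum>b\<in>B. \<Sum>a\<in>A. f a b c)"
proof -
  have "(\<Sum>a\<in>A. \<Sum>b\<in>B. \<Sum>c\<in>C. f a b c) = (\<Sum>a\<in>A. \<Sum>c\<in>C. \<Sum>b\<in>B. f a b c)"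
    by (intro sum.cong refl) (rule sum.swap)
  also have "\<dots> = (\<Sum>c\<in>C. \<Sum>a\<in>A. \<Sum>b\<in>B. f a b c)" by (rule sum.swap)
  also have "\<dots> = (\<Sum>c\<in>C. \<Sum>b\<in>B. \<Sum>a\<in>A. f a b c)" by (intro sum.cong refl) (rule sum.swap)
  finally show ?thesis .
qed

lemma weighted_guess_le_max:
  fixes b1 b0 w1 w0 :: real
  assumes "0 \<le> b1" "0 \<le> b0" "b1 + b0 \<le> 1" "0 \<le> w1" "0 \<le> w0"
  shows "b1 * w1 + b0 * w0 \<le> max w1 w0"
proof -
  have "b1 * w1 + b0 * w0 \<le> b1 * max w1 w0 + b0 * max w1 w0"
    using assms by (intro add_mono mult_left_mono) auto
  also have "\<dots> = (b1 + b0) * max w1 w0" by (simp add: algebra_simps)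
  also have "\<dots> \<le> max w1 w0" using assms mult_right_mono[of "b1 + b0" 1 "max w1 w0"] by auto
  finally show ?thesis .
qed

text \<open>
  A one-way protocol for the index problem: holding \<open>S \<subseteq> {1..n}\<close>, the sender emits
  message \<open>q \<in> Q\<close> with probability \<open>\<mu> S q\<close>; holding \<open>i\<close> and \<open>q\<close>, the receiver answers
  \<open>v\<close> with probability \<open>\<beta> i q v\<close>, and is right (\<open>v = (i \<in> S)\<close>) with probability \<open>\<ge> 2/3\<close>.
  Decoding each message to the majority set \<open>d q\<close> can only help, so on average
  the message determines \<open>S\<close> up to \<open>n/3\<close> errors.\<close>
lemma index_protocol_expected_hamming_dist:
  fixes Q :: "'q set" and \<mu> :: "nat set \<Rightarrow> 'q \<Rightarrow> real" and \<beta> :: "nat \<Rightarrow> 'q \<Rightarrow> bool \<Rightarrow> real"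
  assumes "finite Q"
    and \<mu>_nonneg: "\<And>S q. 0 \<le> \<mu> S q"
    and \<mu>_sum: "\<And>S. S \<subseteq> {1..n} \<Longrightarrow> (\<Sum>q\<in>Q. \<mu> S q) = 1"
    and \<beta>_nonneg: "\<And>i q v. 0 \<le> \<beta> i q v"
    and \<beta>_sum: "\<And>i q. \<beta> i q True + \<beta> i q False \<le> 1"
    and success: "\<And>S i. S \<subseteq> {1..n} \<Longrightarrow> i \<in> {1..n} \<Longrightarrow> (\<Sum>q\<in>Q. \<mu> S q * \<beta> i q (i\<in>S)) \<ge> 2/3"
  shows "\<exists>d. (\<Sum>S\<in>Pow {1..n}. \<Sum>q\<in>Q. \<mu> S q * hamming_dist n S (d q)) \<le> real n * 2^n / 3"
proof -
  define P where "P = Pow {1..n}"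
  define W where "W q i v = (\<Sum>S\<in>P. if (i\<in>S) = v then \<mu> S q else 0)" for q i v
  define d where "d q = {i\<in>{1..n}. W q i True \<ge> W q i False}" for q
  have card_P: "card P = 2^n" unfolding P_def by (simp add: card_Pow)
  have decode: "(\<Sum>S\<in>P. \<mu> S q * \<beta> i q (i\<in>S)) \<le> (\<Sum>S\<in>P. \<mu> S q * (if (i\<in>S) = (i \<in> d q) then 1 else 0))"
    if "i \<in> {1..n}" for q i
  proof -
    have "(\<Sum>S\<in>P. \<mu> S q * \<beta> i q (i\<in>S)) = \<beta> i q True * W q i True + \<beta> i q False * W q i False"
      unfolding W_def sum_distrib_left sum.distrib[symmetric] by (intro sum.cong refl) auto
    also have "\<dots> \<le> max (W q i True) (W q i False)"
      using \<beta>_nonneg \<beta>_sum by (intro weighted_guess_le_max) (auto simp: W_def \<mu>_nonneg intro: sum_nonneg)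
    also have "\<dots> = W q i (i \<in> d q)"
      using that unfolding d_def by (cases "W q i False \<le> W q i True") (auto simp: max_def)
    also have "\<dots> = (\<Sum>S\<in>P. \<mu> S q * (if (i\<in>S) = (i \<in> d q) then 1 else 0))"
      unfolding W_def by (intro sum.cong refl) auto
    finally show ?thesis .
  qed
  have "n * 2^n * (2/3) = (\<Sum>S\<in>P. \<Sum>i\<in>{1..n}. (2::real)/3)" using card_P by simp
  also have "\<dots> \<le> (\<Sum>S\<in>P. \<Sum>i\<in>{1..n}. \<Sum>q\<in>Q. \<mu> S q * \<beta> i q (i\<in>S))"
    using success unfolding P_def by (intro sum_mono) auto
  also have "\<dots> = (\<Sum>q\<in>Q. \<Sum>i\<in>{1..n}. \<Sum>S\<in>P. \<mu> S q * \<beta> i q (i\<in>S))"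
    by (rule sum_reverse_triple)
  also have "\<dots> \<le> (\<Sum>q\<in>Q. \<Sum>i\<in>{1..n}. \<Sum>S\<in>P. \<mu> S q * (if (i\<in>S) = (i \<in> d q) then 1 else 0))"
    by (rule sum_mono, rule sum_mono, rule decode) auto
  also have "\<dots> = (\<Sum>S\<in>P. \<Sum>q\<in>Q. \<mu> S q * (\<Sum>i\<in>{1..n}. if (i\<in>S) = (i \<in> d q) then 1 else 0))"
    by (simp add: sum.swap[of _ P] sum.swap[of _ "{1..n}"] sum_distrib_left)
  also have "\<dots> = (\<Sum>S\<in>P. \<Sum>q\<in>Q. \<mu> S q * n) - (\<Sum>S\<in>P. \<Sum>q\<in>Q. \<mu> S q * hamming_dist n S (d q))"
    unfolding sum_agree_eq_hamming_dist by (simp add: right_diff_distrib sum_subtractf)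
  also have "(\<Sum>S\<in>P. \<Sum>q\<in>Q. \<mu> S q * n) = n * 2^n"
    using \<mu>_sum card_P unfolding P_def by (simp add: sum_distrib_right[symmetric])
  finally have "(\<Sum>S\<in>Pow {1..n}. \<Sum>q\<in>Q. \<mu> S q * hamming_dist n S (d q)) \<le> real n * 2^n / 3"
    unfolding P_def by simp
  then show ?thesis by blast
qed

text \<open>By Markov's inequality, with probability at least \<open>1/6\<close> the set \<open>S\<close> lies in the
  Hamming ball of radius \<open>2m\<close> around the decoded \<open>d q\<close>, and such balls are small.\<close>
lemma index_protocol_lower_bound:
  fixes Q :: "'q set" and \<mu> :: "nat set \<Rightarrow> 'q \<Rightarrow> real" and \<beta> :: "nat \<Rightarrow> 'q \<Rightarrow> bool \<Rightarrow> real"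
  assumes "finite Q"
    and \<mu>_nonneg: "\<And>S q. 0 \<le> \<mu> S q"
    and \<mu>_sum: "\<And>S. S \<subseteq> {1..n} \<Longrightarrow> (\<Sum>q\<in>Q. \<mu> S q) = 1"
    and "\<And>i q v. 0 \<le> \<beta> i q v"
    and "\<And>i q. \<beta> i q True + \<beta> i q False \<le> 1"
    and "\<And>S i. S \<subseteq> {1..n} \<Longrightarrow> i \<in> {1..n} \<Longrightarrow> (\<Sum>q\<in>Q. \<mu> S q * \<beta> i q (i\<in>S)) \<ge> 2/3"
    and n: "n = 5*m"
  shows "(2::real)^n \<le> 6 * real (card Q) * real (card {U. U \<subseteq> {1..n} \<and> card U \<le> 2*m})"
proof -
  obtain d where d: "(\<Sum>S\<in>Pow {1..n}. \<Sum>q\<in>Q. \<mu> S q * hamming_dist n S (d q)) \<le> real n * 2^n / 3"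
    using index_protocol_expected_hamming_dist[OF assms(1-6)] by blast
  define P where "P = Pow {1..n}"
  define near where "near S q \<longleftrightarrow> hamming_dist n S (d q) \<le> 2*m" for S q
  have \<mu>_le_1: "\<mu> S q \<le> 1" if "S \<in> P" "q \<in> Q" for S q
    using member_le_sum[of q Q "\<mu> S"] \<mu>_sum[of S] that \<mu>_nonneg \<open>finite Q\<close> unfolding P_def by auto
  have "real (2*m+1) * (\<Sum>S\<in>P. \<Sum>q\<in>Q. if near S q then 0 else \<mu> S q)
      = (\<Sum>S\<in>P. \<Sum>q\<in>Q. if near S q then 0 else \<mu> S q * real (2*m+1))"
    by (simp add: sum_distrib_left if_distrib mult.commute cong: if_cong)
  also have "\<dots> \<le> (\<Sum>S\<in>P. \<Sum>q\<in>Q. \<mu> S q * hamming_dist n S (d q))"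
    by (intro sum_mono) (auto simp: near_def \<mu>_nonneg intro: mult_left_mono)
  also have "\<dots> \<le> real n * 2^n / 3" using d unfolding P_def .
  also have "\<dots> = real (2*m) * (5/6 * 2^n)" using n by simp
  also have "\<dots> \<le> real (2*m+1) * (5/6 * 2^n)" by (intro mult_right_mono) auto
  finally have far: "(\<Sum>S\<in>P. \<Sum>q\<in>Q. if near S q then 0 else \<mu> S q) \<le> 5/6 * 2^n"
    by (subst (asm) mult_le_cancel_left_pos) auto
  have "(\<Sum>S\<in>P. \<Sum>q\<in>Q. if near S q then \<mu> S q else 0) + (\<Sum>S\<in>P. \<Sum>q\<in>Q. if near S q then 0 else \<mu> S q)
      = (\<Sum>S\<in>P. \<Sum>q\<in>Q. \<mu> S q)"
    by (simp add: sum.distrib[symmetric] if_distrib[of "\<lambda>c. c + _"] cong: if_cong)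
  also have "\<dots> = 2^n" using \<mu>_sum unfolding P_def by (simp add: card_Pow)
  finally have "2^n / 6 \<le> (\<Sum>S\<in>P. \<Sum>q\<in>Q. if near S q then \<mu> S q else 0)"
    using far by linarith
  also have "\<dots> = (\<Sum>q\<in>Q. \<Sum>S\<in>P. if near S q then \<mu> S q else 0)"
    by (rule sum.swap)
  also have "\<dots> = (\<Sum>q\<in>Q. \<Sum>S\<in>{S\<in>P. near S q}. \<mu> S q)"
    using finite_Pow_iff[of "{1..n}"] unfolding P_def[symmetric] by (simp add: sum.inter_filter)
  also have "\<dots> \<le> (\<Sum>q\<in>Q. real (card {U. U \<subseteq> {1..n} \<and> card U \<le> 2*m}))"
  proof (intro sum_mono)
    fix q assume "q \<in> Q"
    then have "(\<Sum>S\<in>{S\<in>P. near S q}. \<mu> S q) \<le> card {S\<in>P. near S q}"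
      using \<mu>_le_1 sum_mono[of "{S\<in>P. near S q}" "\<lambda>S. \<mu> S q" "\<lambda>_. 1"] by auto
    also have "card {S\<in>P. near S q} \<le> card {U. U \<subseteq> {1..n} \<and> card U \<le> 2*m}"
      unfolding P_def near_def by (rule card_hamming_ball_le)
    finally show "(\<Sum>S\<in>{S\<in>P. near S q}. \<mu> S q) \<le> card {U. U \<subseteq> {1..n} \<and> card U \<le> 2*m}"
      by simp
  qed
  finally show ?thesis by simp
qed

lemma measure_bind_pmf_finite_support:
  fixes M :: "'a pmf" and N :: "'a \<Rightarrow> 'b pmf"
  assumes "finite Q" "set_pmf M \<subseteq> Q"
  shows "measure_pmf.prob (bind_pmf M N) X = (\<Sum>q\<in>Q. pmf M q * measure_pmf.prob (N q) X)"
proof -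
  have "ennreal (measure_pmf.prob (bind_pmf M N) X) = (\<integral>\<^sup>+x. emeasure (N x) X \<partial>M)"
    by (simp add: measure_pmf.emeasure_eq_measure[symmetric])
  also have "\<dots> = (\<Sum>x\<in>Q. emeasure (N x) X * pmf M x)"
    using assms by (intro nn_integral_measure_pmf_support) (auto simp: set_pmf_eq)
  also have "\<dots> = (\<Sum>x\<in>Q. ennreal (pmf M x * measure_pmf.prob (N x) X))"
    by (simp add: measure_pmf.emeasure_eq_measure ennreal_mult' mult.commute)
  also have "\<dots> = ennreal (\<Sum>x\<in>Q. pmf M x * measure_pmf.prob (N x) X)"
    by (rule sum_ennreal) simp
  finally show ?thesis by (simp add: sum_nonneg)
qed

definition state_dist :: "alg1 \<Rightarrow> (nat \<times> int) list \<Rightarrow> nat pmf" where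
  "state_dist A D = foldl (\<lambda>s p. bind_pmf s (\<lambda>q. a_step A q p)) (a_init A) D"

lemma run_alg_snoc:
  "run_alg A (D @ [p]) = bind_pmf (state_dist A D) (\<lambda>q. bind_pmf (a_step A q p) (a_out A))"
  unfolding run_alg_def state_dist_def by (simp add: bind_assoc_pmf)

lemma set_pmf_state_dist_subset:
  assumes "set_pmf (a_init A) \<subseteq> Q" "\<forall>q\<in>Q. \<forall>p. set_pmf (a_step A q p) \<subseteq> Q"
  shows "set_pmf (state_dist A D) \<subseteq> Q"
proof (induction D rule: rev_induct)
  case Nil then show ?case using assms by (simp add: state_dist_def)
next
  case (snoc p D)
  then show ?case
    using assms(2) unfolding state_dist_def foldl_append foldl.simps set_bind_pmf by blast
qed

lemma freq_append: "freq (D1 @ D2) j = freq D1 j + freq D2 j"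
  unfolding freq_def by simp

lemma freq_nonneg: "\<forall>p\<in>set D. snd p \<ge> 0 \<Longrightarrow> freq D j \<ge> 0"
  unfolding freq_def by (intro sum_list_nonneg) auto

definition block_stream :: "nat \<Rightarrow> nat set \<Rightarrow> (nat \<times> int) list" where
  "block_stream y S = map (\<lambda>k. (k, int y)) (sorted_list_of_set S)"

lemma freq_block_stream:
  assumes "finite S"
  shows "freq (block_stream y S) j = (if j \<in> S then int y else 0)"
proof -
  have "freq (block_stream y S) j = sum_list (map (\<lambda>k. if k = j then int y else 0) (sorted_list_of_set S))"
    unfolding freq_def block_stream_def by (simp add: sum_list_map_filter' o_def cong: if_cong)
  also have "\<dots> = (\<Sum>k\<in>S. if k = j then int y else 0)"
    using assms by (simp add: sum_list_distinct_conv_sum_set)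
  finally show ?thesis using assms by simp
qed

lemma freq_block_stream_snoc:
  "finite S \<Longrightarrow> freq (block_stream y S @ [(i, int x)]) j
     = int ((if j \<in> S then y else 0) + (if j = i then x else 0))"
  by (simp add: freq_append freq_block_stream) (simp add: freq_def)

lemma valid_stream_block_stream_snoc:
  assumes "S \<subseteq> {1..n}" "i \<in> {1..n}"
  shows "valid_stream n (x + y) (block_stream y S @ [(i, int x)])"
  unfolding valid_stream_def
proof (intro conjI allI impI ballI)
  let ?D = "block_stream y S @ [(i, int x)]"
  have fin: "finite S" using assms finite_subset by blast
  have nonneg: "\<forall>p\<in>set D'. snd p \<ge> 0" if "set D' \<subseteq> set ?D" for D'
    using that by (auto simp: block_stream_def)
  show "fst p \<in> {1..n}" if "p \<in> set ?D" for p
    using that assms fin by (auto simp: block_stream_def)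
  fix k j
  have "freq ?D j = freq (take k ?D) j + freq (drop k ?D) j"
    by (metis append_take_drop_id freq_append)
  moreover have "freq (take k ?D) j \<ge> 0" "freq (drop k ?D) j \<ge> 0"
    by (intro freq_nonneg nonneg set_take_subset set_drop_subset)+
  moreover have "freq ?D j \<le> int (x + y)" using fin by (simp add: freq_block_stream_snoc)
  ultimately show "\<bar>freq (take k ?D) j\<bar> \<le> int (x + y)" by linarith
qed

lemma gsum_block_stream_snoc:
  assumes "S \<subseteq> {1..n}" "i \<in> {1..n}" "h 0 = 0"
  shows "gsum h n (block_stream y S @ [(i, int x)])
    = h (if i \<in> S then y + x else x) + real (card (S - {i})) * h y"
proof -
  have fin: "finite S" using assms finite_subset by blast
  let ?v = "\<lambda>j. (if j \<in> S then y else 0) + (if j = i then x else 0)"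
  have "gsum h n (block_stream y S @ [(i, int x)]) = (\<Sum>j\<in>{1..n}. h (?v j))"
    unfolding gsum_def by (intro sum.cong refl) (simp only: freq_block_stream_snoc[OF fin] nat_int abs_of_nat)
  also have "\<dots> = h (?v i) + (\<Sum>j\<in>{1..n}-{i}. h (?v j))"
    using assms by (subst sum.remove[of _ i]) auto
  also have "(\<Sum>j\<in>{1..n}-{i}. h (?v j)) = (\<Sum>j\<in>S - {i}. h y)"
    using assms by (intro sum.mono_neutral_cong_right) auto
  finally show ?thesis by simp
qed

definition approx_interval :: "real \<Rightarrow> real \<Rightarrow> real \<Rightarrow> real set" where
  "approx_interval \<epsilon> a t = {G. (1 - \<epsilon>) * a \<le> G \<and> G \<le> (1 + \<epsilon>) * (a + t)}"

lemma block_stream_success: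
  assumes sol: "solves_sum A h \<epsilon> n (x + y)" and S: "S \<subseteq> {1..n}" and i: "i \<in> {1..n}"
    and "h 0 = 0" and h_nonneg: "\<And>z. h z \<ge> 0" and "0 \<le> \<epsilon>" "\<epsilon> \<le> 1"
  shows "2/3 \<le> measure_pmf.prob (run_alg A (block_stream y S @ [(i, int x)]))
                 (approx_interval \<epsilon> (h (if i \<in> S then y + x else x)) (n * h y))"
proof -
  let ?D = "block_stream y S @ [(i, int x)]"
  define a where "a = h (if i \<in> S then y + x else x)"
  have gs: "gsum h n ?D = a + real (card (S - {i})) * h y"
    unfolding a_def using gsum_block_stream_snoc[where h=h, OF S i \<open>h 0 = 0\<close>] by simp
  have "card (S - {i}) \<le> card {1..n}" using S by (intro card_mono) auto
  then have "a \<le> gsum h n ?D" "gsum h n ?D \<le> a + n * h y"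
    using gs h_nonneg[of y] by (auto intro: mult_right_mono)
  then have "(1 - \<epsilon>) * a \<le> (1 - \<epsilon>) * gsum h n ?D" "(1 + \<epsilon>) * gsum h n ?D \<le> (1 + \<epsilon>) * (a + n * h y)"
    using assms(6,7) by (intro mult_left_mono; simp)+
  then have sub: "{G. (1 - \<epsilon>) * gsum h n ?D \<le> G \<and> G \<le> (1 + \<epsilon>) * gsum h n ?D} \<subseteq> approx_interval \<epsilon> a (n * h y)"
    unfolding approx_interval_def by auto
  have "2/3 \<le> measure_pmf.prob (run_alg A ?D) {G. (1 - \<epsilon>) * gsum h n ?D \<le> G \<and> G \<le> (1 + \<epsilon>) * gsum h n ?D}"
    using sol valid_stream_block_stream_snoc[OF S i, of x y] unfolding solves_sum_def by simp
  also have "\<dots> \<le> measure_pmf.prob (run_alg A ?D) (approx_interval \<epsilon> a (n * h y))"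
    using sub by (intro measure_pmf.finite_measure_mono) auto
  finally show ?thesis unfolding a_def .
qed

text \<open>
  With \<open>n = 5m\<close> coordinates, a one-pass algorithm that separates the two possible answers
  on the streams \<open>block_stream y S @ [(i, x)]\<close> solves the index problem, with its
  memory state as the message.\<close>
lemma space_lower_bound:
  fixes h :: "nat \<Rightarrow> real" and A :: alg1
  assumes "h 0 = 0" "\<And>z. h z \<ge> 0" "0 \<le> \<epsilon>" "\<epsilon> \<le> 1"
    and disjoint: "approx_interval \<epsilon> (h x) (n * h y) \<inter> approx_interval \<epsilon> (h (y + x)) (n * h y) = {}"
    and n: "n = 5*m"
    and "space_bounded A s" and sol: "solves_sum A h \<epsilon> n (x + y)"
  shows "(3456/3125)^m \<le> 6 * 2 powr s"
proof -
  obtain Q where Q: "finite Q" "real (card Q) \<le> 2 powr s" "set_pmf (a_init A) \<subseteq> Q"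
    "\<forall>q\<in>Q. \<forall>p. set_pmf (a_step A q p) \<subseteq> Q"
    using \<open>space_bounded A s\<close> unfolding space_bounded_def by blast
  have supp: "set_pmf (state_dist A D) \<subseteq> Q" for D
    by (rule set_pmf_state_dist_subset[OF Q(3,4)])
  define I where "I v = approx_interval \<epsilon> (h (if v then y + x else x)) (n * h y)" for v
  define \<mu> where "\<mu> S q = pmf (state_dist A (block_stream y S)) q" for S q
  define \<beta> where "\<beta> i q v = measure_pmf.prob (bind_pmf (a_step A q (i, int x)) (a_out A)) (I v)" for i q v
  define B where "B = card {U. U \<subseteq> {1..n} \<and> card U \<le> 2*m}"
  have "(2::real)^n \<le> 6 * real (card Q) * real B"
    unfolding B_def
  proof (rule index_protocol_lower_bound[OF Q(1) _ _ _ _ _ n])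
    show "0 \<le> \<mu> S q" "0 \<le> \<beta> i q v" for S q i v
      unfolding \<mu>_def \<beta>_def by simp_all
    show "(\<Sum>q\<in>Q. \<mu> S q) = 1" for S
      unfolding \<mu>_def using Q(1) supp by (rule sum_pmf_eq_1)
    show "\<beta> i q True + \<beta> i q False \<le> 1" for i q
    proof -
      have "\<beta> i q True + \<beta> i q False = measure_pmf.prob (bind_pmf (a_step A q (i, int x)) (a_out A)) (I True \<union> I False)"
        using disjoint unfolding \<beta>_def I_def by (subst measure_pmf.finite_measure_Union) auto
      then show ?thesis by simp
    qed
    show "2/3 \<le> (\<Sum>q\<in>Q. \<mu> S q * \<beta> i q (i\<in>S))" if S: "S \<subseteq> {1..n}" and i: "i \<in> {1..n}" for S i
    proof -
      have "2/3 \<le> measure_pmf.prob (run_alg A (block_stream y S @ [(i, int x)])) (I (i \<in> S))"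
        unfolding I_def using block_stream_success[OF sol S i] assms(1-4) by (simp add: if_distrib)
      also have "\<dots> = (\<Sum>q\<in>Q. \<mu> S q * \<beta> i q (i\<in>S))"
        unfolding run_alg_snoc \<mu>_def \<beta>_def by (rule measure_bind_pmf_finite_support[OF Q(1) supp])
      finally show ?thesis .
    qed
  qed
  also have "\<dots> \<le> 6 * 2 powr s * B"
    using Q(2) by (intro mult_right_mono mult_left_mono) auto
  finally have "(3456/3125)^m * 2^n \<le> 6 * 2 powr s * (B * (3456/3125)^m)"
    by (simp add: mult_ac mult_left_mono)
  also have "\<dots> \<le> 6 * 2 powr s * 2^n"
    using card_small_subsets_bound[of m] unfolding B_def n by (intro mult_left_mono) auto
  finally show ?thesis by simp
qed

lemma const_in_S_class:
  assumes "c > 0"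
  shows "(\<lambda>_. c) \<in> S_class"
  unfolding S_class_def
proof safe
  show "0 \<le> c" "antimono (\<lambda>_. c)" using assms by (auto simp: antimono_def)
  fix \<alpha> :: real assume "\<alpha> > 0"
  then show "filterlim (\<lambda>x. real x powr \<alpha> * c) at_top sequentially"
    "(\<lambda>x. real x powr (-\<alpha>) * c) \<longlonglongrightarrow> 0"
    using assms by real_asymp+
qed

lemma subpoly_const:
  assumes "c > 0"
  shows "subpoly (\<lambda>_. c)"
  unfolding subpoly_def
proof safe
  show "0 \<le> c" using assms by simp
  fix \<alpha> :: real assume "\<alpha> > 0"
  then show "filterlim (\<lambda>x. x powr \<alpha> * c) at_top at_top" "((\<lambda>x. x powr (-\<alpha>) * c) \<longlongrightarrow> 0) at_top"
    using assms by real_asymp+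
qed

lemma subpoly_eventually_le_powr:
  assumes "subpoly f" "\<beta> > 0"
  obtains U where "U \<ge> 1" "\<And>u. u \<ge> U \<Longrightarrow> f u \<le> u powr \<beta>"
proof -
  have "((\<lambda>u. u powr (-\<beta>) * f u) \<longlongrightarrow> 0) at_top"
    using assms unfolding subpoly_def by blast
  then have "eventually (\<lambda>u. u powr (-\<beta>) * f u < 1) at_top"
    by (rule order_tendstoD) simp
  then obtain U0 where U0: "\<And>u. u \<ge> U0 \<Longrightarrow> u powr (-\<beta>) * f u < 1"
    by (auto simp: eventually_at_top_linorder)
  show ?thesis
  proof
    fix u assume "max U0 1 \<le> u"
    then have "u > 0" "u powr (-\<beta>) * f u < 1" using U0 by auto
    then show "f u \<le> u powr \<beta>"
      by (simp add: powr_minus field_simps)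
  qed simp
qed

lemma one_pass_tractable_fixed_error:
  assumes "one_pass_tractable g" "\<epsilon> > 0"
  obtains hs where "subpoly hs"
    "\<And>n M. n \<ge> 1 \<Longrightarrow> M \<ge> 1 \<Longrightarrow> \<exists>A. space_bounded A (hs (real (n * M))) \<and> solves_sum A g \<epsilon> n M"
proof -
  have "subpoly (\<lambda>_. 1/\<epsilon>)" using assms(2) by (intro subpoly_const) simp
  then have "\<exists>hs. subpoly hs \<and> (\<forall>n\<ge>1. \<forall>M\<ge>1. \<exists>A. space_bounded A (hs (real (n * M))) \<and> solves_sum A g \<epsilon> n M)"
    using assms(1)[unfolded one_pass_tractable_def, rule_format, of "\<lambda>_. 1/\<epsilon>" "\<lambda>_ _. \<epsilon>"] by simp
  then show ?thesis using that by blast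
qed

lemma quadratic_dominates_linear:
  fixes a b c p :: real
  assumes "c > 0" "a \<ge> 0" "b \<ge> 0" "p \<ge> 1" "p \<ge> (a + b + 2*c) / c"
  shows "a + b * p < c * (p*p - 1)"
proof -
  have "a + b + 2*c \<le> c * p" using assms(1,5) by (simp add: field_simps)
  then have "a * p + b * p + 2*c * p \<le> c * (p * p)"
    using mult_right_mono[of "a + b + 2*c" "c * p" p] assms(4) by (simp add: algebra_simps)
  moreover have "a \<le> a * p" "c < 2*c * p" using assms by (simp_all add: mult_le_cancel_left1)
  moreover have "c * (p*p - 1) = c * (p * p) - c" by (simp add: algebra_simps)
  ultimately show ?thesis by linarith
qed

definition ratio_separated :: "real \<Rightarrow> real \<Rightarrow> real \<Rightarrow> bool" where
  "ratio_separated \<kappa> a b \<longleftrightarrow> (1 + \<kappa>) * a \<le> b \<or> (1 + \<kappa>) * b \<le> a"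

lemma ratio_separated_not_close:
  assumes "ratio_separated \<kappa> a b" "\<kappa> > 0" "a > 0" "b > 0"
  shows "min a b * (\<kappa>/2) < \<bar>b - a\<bar>"
proof -
  have "\<kappa> * a > 0" "\<kappa> * b > 0" using assms by simp_all
  then show ?thesis using assms(1) unfolding ratio_separated_def
    by (auto simp: min_def algebra_simps)
qed

definition far_choice :: "real \<Rightarrow> real \<Rightarrow> real \<Rightarrow> real" where
  "far_choice E b a = (if \<bar>b * E - a\<bar> \<ge> \<bar>b - a\<bar> then b * E else b)"

text \<open>As \<open>b\<close> and \<open>b E\<close> differ by \<open>b (E - 1)\<close>, the farther one is at distance at least
  \<open>b (E - 1) / 2\<close> from \<open>a\<close>.\<close>
lemma far_choice_ratio_separated:
  assumes E: "E > 1" and "a > 0" "b > 0"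
  shows "ratio_separated ((E - 1) / (2 * E)) a (far_choice E b a)"
proof -
  define \<kappa> where "\<kappa> = (E - 1) / (2 * E)"
  define c where "c = far_choice E b a"
  have "b * (E - 1) \<le> \<bar>b * E - a\<bar> + \<bar>b - a\<bar>"
    by (simp add: algebra_simps abs_triangle_ineq4[of _ a] abs_diff_triangle_ineq[of "b*E" a b a, simplified])
  then have dist: "b * (E - 1) / 2 \<le> \<bar>c - a\<bar>" unfolding c_def far_choice_def by auto
  have c: "0 < c" "c \<le> b * E" unfolding c_def far_choice_def using assms by auto
  have "\<kappa> * c \<le> \<kappa> * (b * E)" using c E by (intro mult_left_mono) (auto simp: \<kappa>_def)
  also have "\<dots> = b * (E - 1) / 2" using E by (simp add: \<kappa>_def field_simps)
  finally have gap: "\<kappa> * c \<le> \<bar>c - a\<bar>" using dist by linarith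
  have "0 \<le> \<kappa>" "\<kappa> < 1" using E by (auto simp: \<kappa>_def field_simps)
  then have "(1 + \<kappa>) * a \<le> c \<or> (1 + \<kappa>) * c \<le> a"
  proof (cases "c \<ge> a")
    case True
    then have "(1 + \<kappa>) * a \<le> (1 + \<kappa>) * ((1 - \<kappa>) * c)"
      using gap \<open>0 \<le> \<kappa>\<close> by (intro mult_left_mono) (auto simp: algebra_simps)
    also have "\<dots> \<le> c" using c \<open>0 \<le> \<kappa>\<close> by (simp add: algebra_simps)
    finally show ?thesis by simp
  qed (use gap in \<open>auto simp: algebra_simps\<close>)
  then show ?thesis unfolding ratio_separated_def \<kappa>_def c_def .
qed

lemma approx_intervals_disjoint:
  assumes "0 < \<kappa>" "\<kappa> < 1/2" "a0 > 0" "a1 > 0" "0 \<le> t" "t \<le> \<kappa>/10 * a0"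
    and "ratio_separated \<kappa> a0 a1"
  shows "approx_interval (\<kappa>/10) a0 t \<inter> approx_interval (\<kappa>/10) a1 t = {}"
proof -
  define \<epsilon> where "\<epsilon> = \<kappa>/10"
  note k = assms(1,2) and a0 = assms(3) and t = assms(5,6)
  have "False" if "G \<in> approx_interval \<epsilon> a0 t" "G \<in> approx_interval \<epsilon> a1 t" for G
  proof -
    from that have G: "(1-\<epsilon>)*a0 \<le> G" "G \<le> (1+\<epsilon>)*(a0 + t)" "(1-\<epsilon>)*a1 \<le> G" "G \<le> (1+\<epsilon>)*(a1 + t)"
      unfolding approx_interval_def by auto
    have kk: "\<kappa>*\<kappa> < \<kappa>*(1/2)" using k by (intro mult_strict_left_mono) auto
    show False
    proof (cases "(1+\<kappa>)*a0 \<le> a1")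
      case True
      have "(1-\<epsilon>)*((1+\<kappa>)*a0) \<le> (1-\<epsilon>)*a1" using True k unfolding \<epsilon>_def by (intro mult_left_mono) auto
      also have "\<dots> \<le> (1+\<epsilon>)*(a0 + t)" using G by linarith
      also have "\<dots> \<le> (1+\<epsilon>)*(a0 + \<epsilon>*a0)" using t k unfolding \<epsilon>_def by (intro mult_left_mono) auto
      finally have "((1-\<epsilon>)*(1+\<kappa>))*a0 \<le> ((1+\<epsilon>)*(1+\<epsilon>))*a0" by (simp add: algebra_simps)
      then have "(1-\<epsilon>)*(1+\<kappa>) \<le> (1+\<epsilon>)*(1+\<epsilon>)" using a0 by simp
      moreover have "(1-\<epsilon>)*(1+\<kappa>) = 1 + 9*\<kappa>/10 - \<kappa>*\<kappa>/10" "(1+\<epsilon>)*(1+\<epsilon>) = 1 + \<kappa>/5 + \<kappa>*\<kappa>/100"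
        unfolding \<epsilon>_def by (simp_all add: field_simps)
      ultimately show False using k kk by linarith
    next
      case False
      then have J: "(1+\<kappa>)*a1 \<le> a0" using assms(7) unfolding ratio_separated_def by auto
      have "(1-\<epsilon>)*a0 \<le> (1+\<epsilon>)*(a1 + t)" using G by linarith
      also have "\<dots> \<le> (1+\<epsilon>)*(a1 + \<epsilon>*a0)" using t k unfolding \<epsilon>_def by (intro mult_left_mono) auto
      finally have "(1+\<kappa>)*((1-\<epsilon>)*a0) \<le> (1+\<kappa>)*((1+\<epsilon>)*(a1 + \<epsilon>*a0))" using k by (intro mult_left_mono) auto
      also have "\<dots> = (1+\<epsilon>)*((1+\<kappa>)*a1) + (1+\<kappa>)*(1+\<epsilon>)*\<epsilon>*a0" by (simp add: algebra_simps)
      also have "\<dots> \<le> (1+\<epsilon>)*a0 + (1+\<kappa>)*(1+\<epsilon>)*\<epsilon>*a0" using J k unfolding \<epsilon>_def by (intro add_right_mono mult_left_mono) auto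
      finally have "((1+\<kappa>)*(1-\<epsilon>))*a0 \<le> ((1+\<epsilon>) + (1+\<kappa>)*(1+\<epsilon>)*\<epsilon>)*a0" by (simp add: algebra_simps)
      then have "(1+\<kappa>)*(1-\<epsilon>) \<le> (1+\<epsilon>) + (1+\<kappa>)*(1+\<epsilon>)*\<epsilon>" using a0 by simp
      moreover have "(1+\<kappa>)*(1-\<epsilon>) = 1 + 9*\<kappa>/10 - \<kappa>*\<kappa>/10"
        "(1+\<epsilon>) + (1+\<kappa>)*(1+\<epsilon>)*\<epsilon> = 1 + \<kappa>/5 + 11*(\<kappa>*\<kappa>)/100 + \<kappa>*\<kappa>*\<kappa>/100"
        unfolding \<epsilon>_def by (simp_all add: field_simps)
      moreover have "\<kappa>*\<kappa>*\<kappa> < (\<kappa>*\<kappa>)/2" using k kk by (simp add: mult_strict_right_mono)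
      ultimately show False using k kk by linarith
    qed
  qed
  then show ?thesis unfolding \<epsilon>_def by blast
qed

lemma le_powr_if_root_le:
  fixes a b y :: real
  assumes "a > 0" "b > 0" "b powr (1/a) \<le> y"
  shows "b \<le> y powr a"
proof -
  have "b = (b powr (1/a)) powr a" using assms by (simp add: powr_powr)
  also have "\<dots> \<le> y powr a" using assms by (intro powr_mono2) auto
  finally show ?thesis .
qed

lemma powr_le_of_le_mult_powr:
  fixes \<alpha> u y :: real
  assumes "\<alpha> > 0" "1 \<le> y" "0 \<le> u" "u \<le> 10 * y * y powr (\<alpha>/2)"
  shows "u powr (\<alpha> / (4 + 2*\<alpha>)) \<le> 10 powr (\<alpha> / (4 + 2*\<alpha>)) * y powr (\<alpha>/4)"
proof -
  define \<beta> where "\<beta> = \<alpha> / (4 + 2*\<alpha>)"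
  have exponent: "(1 + \<alpha>/2) * \<beta> = \<alpha>/4" using assms(1) by (simp add: \<beta>_def field_simps)
  have "u powr \<beta> \<le> (10 * y powr (1 + \<alpha>/2)) powr \<beta>"
    using assms by (intro powr_mono2) (auto simp: \<beta>_def powr_add)
  also have "\<dots> = 10 powr \<beta> * (y powr (1 + \<alpha>/2)) powr \<beta>"
    using assms(2) by (simp add: powr_mult)
  also have "(y powr (1 + \<alpha>/2)) powr \<beta> = y powr (\<alpha>/4)"
    unfolding powr_powr exponent ..
  finally show ?thesis unfolding \<beta>_def .
qed

lemma log_pow_le_of_pow_le_mult_powr:
  fixes b C s :: real
  assumes "b > 0" "C > 0" "b ^ m \<le> C * 2 powr s"
  shows "log 2 b * real m \<le> log 2 C + s"
proof -
  have "2 powr (log 2 b * real m) = b ^ m"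
    using assms(1) by (simp add: powr_powr[symmetric] powr_realpow)
  also have "\<dots> \<le> 2 powr (log 2 C + s)"
    using assms by (simp add: powr_add)
  finally show ?thesis by simp
qed

text \<open>
  The perturbation of \<open>g\<close> along a sequence of \<open>\<alpha>\<close>-periods \<open>Y k\<close> with witnesses \<open>X k\<close>:
  the value at \<open>Z k = X k + Y k\<close> is multiplied by \<open>1\<close> or \<open>E\<close>, whichever makes it
  far from the value at \<open>X k\<close>.\<close>
locale period_perturbation =
  fixes g :: "nat \<Rightarrow> real" and \<alpha> E :: real
  assumes g_in_G: "g \<in> G_class" and \<alpha>_pos: "\<alpha> > 0" and E_gt_1: "E > 1"
    and periods: "\<forall>N>0. \<exists>x y. x < y \<and> real y \<ge> N \<and> g y \<le> g x / real y powr \<alpha>"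
begin

definition period_pair :: "real \<Rightarrow> nat \<times> nat" where
  "period_pair N = (SOME p. fst p < snd p \<and> real (snd p) \<ge> N \<and> g (snd p) \<le> g (fst p) / real (snd p) powr \<alpha>)"

text \<open>Each period is taken beyond the previous sum, so that the points \<open>Z k\<close> increase and
  the modifications from stage \<open>k\<close> on leave the value at \<open>X k\<close> untouched.\<close>
primrec period_pairs :: "nat \<Rightarrow> nat \<times> nat" where
  "period_pairs 0 = period_pair 1"
| "period_pairs (Suc k) = period_pair (real (fst (period_pairs k) + snd (period_pairs k) + k + 1))"

definition X :: "nat \<Rightarrow> nat" where "X k = fst (period_pairs k)"
definition Y :: "nat \<Rightarrow> nat" where "Y k = snd (period_pairs k)"
definition Z :: "nat \<Rightarrow> nat" where "Z k = X k + Y k"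

lemma period_pair_spec:
  assumes "N > 0"
  shows "fst (period_pair N) < snd (period_pair N) \<and> real (snd (period_pair N)) \<ge> N \<and>
    g (snd (period_pair N)) \<le> g (fst (period_pair N)) / real (snd (period_pair N)) powr \<alpha>"
proof -
  obtain x y where "x < y \<and> real y \<ge> N \<and> g y \<le> g x / real y powr \<alpha>" using periods assms by blast
  then have "\<exists>p. fst p < snd p \<and> real (snd p) \<ge> N \<and> g (snd p) \<le> g (fst p) / real (snd p) powr \<alpha>"
    by (intro exI[of _ "(x, y)"]) auto
  then show ?thesis unfolding period_pair_def by (rule someI_ex)
qed

lemma X_less_Y: "X k < Y k" and g_Y_le: "g (Y k) \<le> g (X k) / real (Y k) powr \<alpha>"
proof -
  have "fst (period_pairs k) < snd (period_pairs k) \<and>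
      g (snd (period_pairs k)) \<le> g (fst (period_pairs k)) / real (snd (period_pairs k)) powr \<alpha>"
  proof (cases k)
    case 0
    then show ?thesis using period_pair_spec[of 1] by simp
  next
    case (Suc j)
    then show ?thesis using period_pair_spec[of "real (X j + Y j + j + 1)"] by (simp add: X_def Y_def)
  qed
  then show "X k < Y k" "g (Y k) \<le> g (X k) / real (Y k) powr \<alpha>" unfolding X_def Y_def by auto
qed

lemma Y_Suc_ge: "Z k + k + 1 \<le> Y (Suc k)"
  using period_pair_spec[of "real (X k + Y k + k + 1)"] unfolding Y_def Z_def X_def by simp

lemma Y_ge: "k + 1 \<le> Y k"
proof (cases k)
  case 0
  then show ?thesis using period_pair_spec[of 1] unfolding Y_def by simp
next
  case (Suc j)
  then show ?thesis using Y_Suc_ge[of j] X_less_Y[of j] unfolding Z_def by simp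
qed

lemma X_ge_1: "1 \<le> X k"
proof (rule ccontr)
  assume "\<not> 1 \<le> X k"
  then have "X k = 0" by simp
  then have "g (Y k) \<le> 0" using g_Y_le[of k] g_in_G unfolding G_class_def by simp
  moreover have "g (Y k) > 0" using g_in_G Y_ge[of k] unfolding G_class_def by simp
  ultimately show False by simp
qed

lemma Z_ge: "k + 2 \<le> Z k"
  using X_ge_1[of k] Y_ge[of k] unfolding Z_def by simp

lemma strict_mono_Z: "strict_mono Z"
proof (rule strict_monoI_Suc)
  fix k show "Z k < Z (Suc k)" using Y_Suc_ge[of k] unfolding Z_def[of "Suc k"] by simp
qed

primrec stage :: "nat \<Rightarrow> nat \<Rightarrow> real" where
  "stage 0 = g"
| "stage (Suc k) = (stage k)(Z k := far_choice E (g (Z k)) (stage k (X k)))"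

text \<open>Since \<open>Z k \<ge> k + 2\<close>, no stage after the \<open>(w + 1)\<close>-st changes the value at \<open>w\<close>.\<close>
definition g_mod :: "nat \<Rightarrow> real" where
  "g_mod w = stage (Suc w) w"

lemma stage_cases: "stage k w = g w \<or> stage k w = g w * E"
  by (induction k) (auto simp: far_choice_def)

lemma stage_stable:
  assumes "\<And>i. a \<le> i \<Longrightarrow> Z i \<noteq> w" "a \<le> j"
  shows "stage j w = stage a w"
  using assms(2)
proof (induction j)
  case (Suc j)
  show ?case
  proof (cases "a = Suc j")
    case False
    then have "a \<le> j" using Suc.prems by simp
    then show ?thesis using Suc.IH assms(1)[of j] by simp
  qed simp
qed simp

lemma g_mod_cases: "g_mod w = g w \<or> g_mod w = g w * E"
  unfolding g_mod_def by (rule stage_cases)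

lemma g_mod_eq_below_2:
  assumes "w < 2"
  shows "g_mod w = g w"
proof -
  have "Z i \<noteq> w" for i using Z_ge[of i] assms by simp
  then show ?thesis using stage_stable[of 0 w "Suc w"] unfolding g_mod_def by simp
qed

lemma g_mod_X: "g_mod (X k) = stage k (X k)"
proof -
  define a where "a = min k (Suc (X k))"
  have not_Z: "Z i \<noteq> X k" if "a \<le> i" for i
  proof (cases "k \<le> i")
    case True
    then have "Z k \<le> Z i" using strict_mono_Z by (simp add: strict_mono_less_eq)
    then show ?thesis using X_less_Y[of k] unfolding Z_def by simp
  next
    case False
    then show ?thesis using that Z_ge[of i] unfolding a_def by simp
  qed
  have "a \<le> k" "a \<le> Suc (X k)" unfolding a_def by simp_all
  then have "stage k (X k) = stage a (X k)" "stage (Suc (X k)) (X k) = stage a (X k)"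
    using stage_stable[OF not_Z] by blast+
  then show ?thesis unfolding g_mod_def by (simp only:)
qed

lemma g_mod_Z: "g_mod (Z k) = far_choice E (g (Z k)) (g_mod (X k))"
proof -
  have "Z i \<noteq> Z k" if "Suc k \<le> i" for i
    using strict_monoD[OF strict_mono_Z, of k i] that by simp
  then have "g_mod (Z k) = stage (Suc k) (Z k)"
    unfolding g_mod_def using Z_ge[of k] by (intro stage_stable) auto
  then show ?thesis by (simp add: g_mod_X)
qed

definition \<kappa> :: real where "\<kappa> = (E - 1) / (2 * E)"

lemma \<kappa>_pos: "0 < \<kappa>" and \<kappa>_less_half: "\<kappa> < 1/2"
  unfolding \<kappa>_def using E_gt_1 by (auto simp: field_simps)

lemma g_pos: "0 < w \<Longrightarrow> 0 < g w" and g_0: "g 0 = 0" and g_1: "g 1 = 1"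
  using g_in_G unfolding G_class_def by auto

lemma g_nonneg: "0 \<le> g w"
  using g_pos[of w] g_0 by (cases "w = 0") simp_all

lemma g_le_g_mod: "g w \<le> g_mod w" and g_mod_le: "g_mod w \<le> E * g w"
proof -
  have "g w * 1 \<le> g w * E" using g_nonneg[of w] E_gt_1 by (intro mult_left_mono) auto
  then show "g w \<le> g_mod w" "g_mod w \<le> E * g w"
    using g_mod_cases[of w] by (auto simp: mult.commute)
qed

lemma g_mod_pos: "0 < w \<Longrightarrow> 0 < g_mod w"
  using g_le_g_mod[of w] g_pos[of w] by linarith

lemma g_mod_nonneg: "0 \<le> g_mod w"
  using g_le_g_mod[of w] g_nonneg[of w] by linarith

lemma g_mod_in_G: "g_mod \<in> G_class"
  using g_mod_eq_below_2[of 0] g_mod_eq_below_2[of 1] g_0 g_1 g_mod_pos unfolding G_class_def by simp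

lemma Theta_g_mod_le: "Theta g g_mod \<le> ereal (ln E)"
  unfolding Theta_def
proof (rule SUP_least)
  fix w :: nat assume "w \<in> {1..}"
  then have "g w > 0" using g_pos by simp
  then show "ereal \<bar>ln (g w) - ln (g_mod w)\<bar> \<le> ereal (ln E)"
    using g_mod_cases[of w] E_gt_1 by (auto simp: ln_mult)
qed

lemma g_mod_separated: "ratio_separated \<kappa> (g_mod (X k)) (g_mod (Z k))"
  unfolding g_mod_Z \<kappa>_def using X_ge_1[of k] Z_ge[of k]
  by (intro far_choice_ratio_separated E_gt_1 g_mod_pos g_pos) auto

lemma g_mod_period_decay: "g_mod (Y k) * real (Y k) powr \<alpha> \<le> E * g_mod (X k)"
proof -
  have "0 < real (Y k) powr \<alpha>" using Y_ge[of k] by simp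
  then have "g (Y k) * real (Y k) powr \<alpha> \<le> g (X k)"
    using g_Y_le[of k] by (simp add: pos_le_divide_eq)
  then have "E * (g (Y k) * real (Y k) powr \<alpha>) \<le> E * g_mod (X k)"
    using g_le_g_mod[of "X k"] E_gt_1 by (intro mult_left_mono) auto
  moreover have "g_mod (Y k) * real (Y k) powr \<alpha> \<le> E * g (Y k) * real (Y k) powr \<alpha>"
    using g_mod_le \<open>0 < real (Y k) powr \<alpha>\<close> by (intro mult_right_mono) auto
  ultimately show ?thesis by (simp add: mult.assoc)
qed

lemma g_mod_half_period:
  assumes "E powr (2/\<alpha>) \<le> real (Y k)"
  shows "g_mod (Y k) * real (Y k) powr (\<alpha>/2) \<le> g_mod (X k)"
proof -
  define q where "q = real (Y k) powr (\<alpha>/2)"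
  have "E \<le> q" unfolding q_def using le_powr_if_root_le[of "\<alpha>/2" E] assms \<alpha>_pos E_gt_1 by simp
  have "(g_mod (Y k) * q) * q = g_mod (Y k) * real (Y k) powr \<alpha>"
    unfolding q_def by (simp flip: powr_add)
  also have "\<dots> \<le> E * g_mod (X k)" by (rule g_mod_period_decay)
  also have "\<dots> \<le> g_mod (X k) * q" using \<open>E \<le> q\<close> g_mod_nonneg by (simp add: mult.commute mult_right_mono)
  finally have "(g_mod (Y k) * q) * q \<le> g_mod (X k) * q" .
  moreover have "0 < q" using \<open>E \<le> q\<close> E_gt_1 by simp
  ultimately show ?thesis unfolding q_def by (rule mult_right_le_imp_le)
qed

lemma normal_g_mod: "normal S_class g_mod"
  unfolding normal_def nearly_periodic_def
proof
  assume np: "(\<exists>\<alpha>>0. \<forall>N>0. \<exists>x y. x < y \<and> N \<le> real y \<and> g_mod y \<le> g_mod x / real y powr \<alpha>) \<and>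
    (\<forall>\<alpha>>0. \<forall>h\<in>S_class. \<exists>N1>0. \<forall>y x. alpha_period g_mod \<alpha> y \<and> N1 \<le> real y \<and> x < y \<and>
       g_mod y * real y powr \<alpha> \<le> g_mod x \<longrightarrow> \<bar>g_mod (x + y) - g_mod x\<bar> \<le> min (g_mod x) (g_mod (x + y)) * h y)"
  have "\<exists>N1>0. \<forall>y x. alpha_period g_mod (\<alpha>/2) y \<and> N1 \<le> real y \<and> x < y \<and>
      g_mod y * real y powr (\<alpha>/2) \<le> g_mod x \<longrightarrow> \<bar>g_mod (x + y) - g_mod x\<bar> \<le> min (g_mod x) (g_mod (x + y)) * (\<kappa>/2)"
    using conjunct2[OF np, rule_format, of "\<alpha>/2" "\<lambda>_. \<kappa>/2"] \<alpha>_pos const_in_S_class[of "\<kappa>/2"] \<kappa>_pos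
    by simp
  then obtain N1 where close: "\<And>y x. alpha_period g_mod (\<alpha>/2) y \<Longrightarrow> N1 \<le> real y \<Longrightarrow> x < y \<Longrightarrow>
      g_mod y * real y powr (\<alpha>/2) \<le> g_mod x \<Longrightarrow> \<bar>g_mod (x + y) - g_mod x\<bar> \<le> min (g_mod x) (g_mod (x + y)) * (\<kappa>/2)"
    by blast
  define k where "k = nat \<lceil>max N1 (E powr (2/\<alpha>))\<rceil>"
  have Yk: "N1 \<le> real (Y k)" "E powr (2/\<alpha>) \<le> real (Y k)"
    using Y_ge[of k] unfolding k_def by linarith+
  have decay: "g_mod (Y k) * real (Y k) powr (\<alpha>/2) \<le> g_mod (X k)"
    using Yk(2) by (rule g_mod_half_period)
  then have "alpha_period g_mod (\<alpha>/2) (Y k)"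
    unfolding alpha_period_def using X_less_Y[of k] Y_ge[of k] by (auto simp: pos_le_divide_eq)
  then have "\<bar>g_mod (Z k) - g_mod (X k)\<bar> \<le> min (g_mod (X k)) (g_mod (Z k)) * (\<kappa>/2)"
    using close Yk(1) X_less_Y decay unfolding Z_def by simp
  moreover have "min (g_mod (X k)) (g_mod (Z k)) * (\<kappa>/2) < \<bar>g_mod (Z k) - g_mod (X k)\<bar>"
    using X_ge_1[of k] Z_ge[of k]
    by (intro ratio_separated_not_close[OF g_mod_separated \<kappa>_pos] g_mod_pos) auto
  ultimately show False by linarith
qed

lemma g_mod_space_lower_bound:
  assumes "50 * E * real m \<le> \<kappa> * real (Y k) powr \<alpha>"
    and "space_bounded A s" "solves_sum A g_mod (\<kappa>/10) (5*m) (Z k)"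
  shows "(3456/3125)^m \<le> 6 * 2 powr s"
proof -
  define t where "t = real (5*m) * g_mod (Y k)"
  have "E * (50 * (real m * g_mod (Y k))) \<le> \<kappa> * (g_mod (Y k) * real (Y k) powr \<alpha>)"
    using mult_right_mono[OF assms(1) g_mod_nonneg[of "Y k"]] by (simp add: mult_ac)
  also have "\<dots> \<le> \<kappa> * (E * g_mod (X k))"
    using g_mod_period_decay \<kappa>_pos by (intro mult_left_mono) auto
  also have "\<dots> = E * (\<kappa> * g_mod (X k))" by simp
  finally have "50 * (real m * g_mod (Y k)) \<le> \<kappa> * g_mod (X k)"
    using E_gt_1 by (simp add: mult_le_cancel_left_pos)
  then have "t \<le> \<kappa>/10 * g_mod (X k)" unfolding t_def by simp
  moreover have "ratio_separated \<kappa> (g_mod (X k)) (g_mod (Y k + X k))"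
    using g_mod_separated[of k] unfolding Z_def by (simp add: add.commute)
  ultimately have "approx_interval (\<kappa>/10) (g_mod (X k)) t \<inter> approx_interval (\<kappa>/10) (g_mod (Y k + X k)) t = {}"
    using X_ge_1[of k] \<kappa>_pos \<kappa>_less_half g_mod_nonneg
    by (intro approx_intervals_disjoint g_mod_pos) (auto simp: t_def)
  then show ?thesis
    using assms(2,3) \<kappa>_pos \<kappa>_less_half g_mod_eq_below_2[of 0] g_0 g_mod_nonneg unfolding Z_def t_def
    by (intro space_lower_bound[where h = g_mod and x = "X k" and y = "Y k" and n = "5*m"]) (auto simp: add.commute)
qed

text \<open>
  At the period \<open>y = Y k\<close> take \<open>m \<approx> y^(\<alpha>/2)\<close> coordinates; then the space needed grows like
  \<open>m\<close>, while a sub-polynomial space bound in \<open>n M \<le> 10 y m\<close> grows only like \<open>y^(\<alpha>/4)\<close>.\<close>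
lemma not_one_pass_tractable_g_mod: "\<not> one_pass_tractable g_mod"
proof
  assume "one_pass_tractable g_mod"
  moreover have "\<kappa>/10 > 0" using \<kappa>_pos by simp
  ultimately obtain hs where "subpoly hs" and alg: "\<And>n M. n \<ge> 1 \<Longrightarrow> M \<ge> 1 \<Longrightarrow>
      \<exists>A. space_bounded A (hs (real (n * M))) \<and> solves_sum A g_mod (\<kappa>/10) n M"
    using one_pass_tractable_fixed_error by blast
  define \<beta> where "\<beta> = \<alpha> / (4 + 2*\<alpha>)"
  have "\<beta> > 0" using \<alpha>_pos by (simp add: \<beta>_def)
  with \<open>subpoly hs\<close> obtain U where "U \<ge> 1" and hs_le: "\<And>u. u \<ge> U \<Longrightarrow> hs u \<le> u powr \<beta>"
    using subpoly_eventually_le_powr by blast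
  define c where "c = log 2 (3456/3125)"
  define L where "L = log 2 6"
  have "c > 0" "L > 0" by (simp_all add: c_def L_def)
  define P where "P = max ((L + 10 powr \<beta> + 2*c) / c) (50 * E / \<kappa>)"
  have "P > 0" using E_gt_1 \<kappa>_pos by (simp add: P_def max.strict_coboundedI2)
  define k where "k = nat \<lceil>max U (P powr (4/\<alpha>))\<rceil>"
  have Yk: "U \<le> real (Y k)" "P powr (4/\<alpha>) \<le> real (Y k)"
    using Y_ge[of k] unfolding k_def by linarith+
  define p where "p = real (Y k) powr (\<alpha>/4)"
  have "P \<le> p" unfolding p_def using le_powr_if_root_le[of "\<alpha>/4" P] Yk(2) \<alpha>_pos \<open>P > 0\<close> by simp
  moreover have "1 \<le> 50 * E / \<kappa>" using E_gt_1 \<kappa>_pos \<kappa>_less_half by (simp add: field_simps)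
  ultimately have p: "(L + 10 powr \<beta> + 2*c) / c \<le> p" "50 * E / \<kappa> \<le> p" "1 \<le> p"
    unfolding P_def by linarith+
  have Y_powr: "real (Y k) powr (\<alpha>/2) = p * p" "real (Y k) powr \<alpha> = (p * p) * (p * p)"
    unfolding p_def by (simp_all flip: powr_add)
  define m where "m = nat \<lfloor>p * p\<rfloor>"
  have "p \<le> p * p" using p(3) by (simp add: mult_le_cancel_left1)
  then have m: "real m \<le> p * p" "p * p - 1 \<le> real m" "1 \<le> m"
    unfolding m_def using p(3) by linarith+
  have "50 * E \<le> \<kappa> * p" using p(2) \<kappa>_pos by (simp add: field_simps)
  also have "\<dots> \<le> \<kappa> * (p * p)" using \<open>p \<le> p * p\<close> \<kappa>_pos by simp
  finally have "50 * E * real m \<le> \<kappa> * (p * p) * (p * p)"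
    using m(1) by (rule mult_mono) (use \<kappa>_pos in auto)
  then have "50 * E * real m \<le> \<kappa> * real (Y k) powr \<alpha>"
    unfolding Y_powr by (simp add: mult.assoc)
  moreover obtain A where A: "space_bounded A (hs (real (5*m * Z k)))" "solves_sum A g_mod (\<kappa>/10) (5*m) (Z k)"
    using alg[of "5*m" "Z k"] m(3) Z_ge[of k] by auto
  ultimately have "c * real m \<le> L + hs (real (5*m * Z k))"
    unfolding c_def L_def by (intro log_pow_le_of_pow_le_mult_powr g_mod_space_lower_bound) auto
  moreover have "hs (real (5*m * Z k)) \<le> 10 powr \<beta> * p"
  proof -
    have "real (Y k) \<le> 1 * real (Z k)" unfolding Z_def by simp
    also have "\<dots> \<le> real (5*m) * real (Z k)" using m(3) by (intro mult_right_mono) auto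
    finally have "real (Y k) \<le> real (5*m * Z k)" by (simp only: of_nat_mult)
    moreover have "real m * real (Z k) \<le> (p * p) * (2 * real (Y k))"
      using m(1) X_less_Y[of k] unfolding Z_def by (intro mult_mono) auto
    then have "real (5*m * Z k) \<le> 10 * real (Y k) * real (Y k) powr (\<alpha>/2)"
      unfolding Y_powr by (simp add: mult_ac)
    ultimately have "hs (real (5*m * Z k)) \<le> real (5*m * Z k) powr \<beta>"
      using hs_le Yk(1) by simp
    also have "\<dots> \<le> 10 powr \<beta> * p"
      unfolding \<beta>_def p_def using Y_ge[of k]
      by (intro powr_le_of_le_mult_powr[OF \<alpha>_pos] \<open>real (5*m * Z k) \<le> _\<close>) auto
    finally show ?thesis .
  qed
  moreover have "L + 10 powr \<beta> * p < c * (p * p - 1)"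
    using \<open>c > 0\<close> \<open>L > 0\<close> p by (intro quadratic_dominates_linear) auto
  moreover have "c * (p * p - 1) \<le> c * real m" using m(2) \<open>c > 0\<close> by simp
  ultimately show False by linarith
qed

end

theorem theorem64:
  fixes g :: "nat \<Rightarrow> real"
  assumes "g \<in> G_class" and "nearly_periodic S_class g"
  shows "\<forall>\<delta>>0. \<exists>h\<in>G_class. normal S_class h \<and> \<not> one_pass_tractable h \<and> Theta g h \<le> ereal \<delta>"
proof (intro allI impI)
  fix \<delta> :: real assume "\<delta> > 0"
  obtain \<alpha> where "\<alpha> > 0" and "\<forall>N>0. \<exists>x y. x < y \<and> real y \<ge> N \<and> g y \<le> g x / real y powr \<alpha>"
    using assms(2) unfolding nearly_periodic_def by blast
  then interpret period_perturbation g \<alpha> "exp \<delta>"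
    using assms(1) \<open>\<delta> > 0\<close> by unfold_locales auto
  show "\<exists>h\<in>G_class. normal S_class h \<and> \<not> one_pass_tractable h \<and> Theta g h \<le> ereal \<delta>"
    using g_mod_in_G normal_g_mod not_one_pass_tractable_g_mod Theta_g_mod_le by auto
qed

end
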